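(* Let $n\ge 2$, let $q\in\{2,\dots,n\}$ and let $r_1,\dots,r_q\in\mathbb{N}$. Let $X\in\mathcal{H}_{0,r_1,\dots,r_q}$ satisfy $$B_1B_2\cdots B_q X=0 .$$ Then $X=0$.
   Context: Fix $n\ge 1$ and $s\ge 1$. For integers $k,l_1,\dots,l_s$, let $\mathcal{H}_{k,l_1,\dots,l_s}$ denote the real vector space of arrays $X^{J_1,\dots,J_s}_{i_1\dots i_k}$, where all indices range over $\{1,\dots,n\}$, each $J_\alpha=(j^{\alpha}_1,\dots,j^{\alpha}_{l_\alpha})$ is a string of $l_\alpha$ indices, the array is totally antisymmetric in $i_1,\dots,i_k$ and totally symmetric in the indices of each $J_\alpha$ separately. By convention $\mathcal{H}_{k,l_1,\dots,l_s}=0$ if some index $k,l_1,\dots,l_s$ is negative or if $k>n$. (Equivalently, $\mathcal{H}_{k,l_1,\dots,l_s}$ is the subspace of $\mathcal{F}^{-}(\mathbb{R}^n)\otimes\mathcal{F}^{+}(\mathbb{R}^n)^{\otimes s}$ with $k$ fermions and $l_\alpha$ bosons of type $\alpha$.) Denote by $\mathcal{S}^{+}_{a_1,\dots,a_p}$ (resp. $\mathcal{S}^{-}_{a_1,\dots,a_p}$) the symmetrization (resp. antisymmetrization) in the listed indices, normalized by $1/p!$. For $\alpha=1,\dots,s$ the operator $B_\alpha:\mathcal{H}_{k,l_1,\dots,l_s}\to\mathcal{H}_{k+1,l_1,\dots,l_\alpha+1,\dots,l_s}$ (in Fock language $B_\alpha=\sum_i b^{*}_{(\alpha)i}a^{*i}$)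 is defined by $$(B_\alpha X)^{J_1,\dots,J_{\alpha-1},\{j_0,j_1,\dots,j_l\},J_{\alpha+1},\dots,J_s}_{i_0i_1\dots i_k}=\mathcal{S}^{+}_{j_0,\dots,j_l}\,\mathcal{S}^{-}_{i_0,\dots,i_k}\,\delta^{j_0}_{i_0}\,X^{J_1,\dots,J_{\alpha-1},\{j_1,\dots,j_l\},J_{\alpha+1},\dots,J_s}_{i_1\dots i_k},$$ where $l=l_\alpha$ (the result is $0$ if $k+1>n$). *)

theory Defs
  imports Complex_Main "HOL-Combinatorics.Permutations"
begin

text \<open>An array X^{J_1..J_s}_{i_1..i_k} is modelled as a function of the list of
  fermion (lower) indices and the list of the s boson index strings J_1..J_s.
  Indices range over {1..n}; the function is required to vanish on arguments of the
  wrong shape, so that elements of H_{k,l_1..l_s} correspond exactly to such arrays.\<close>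

type_synonym arr = "nat list \<Rightarrow> nat list list \<Rightarrow> real"

definition valid_shape :: "nat \<Rightarrow> nat \<Rightarrow> nat list \<Rightarrow> nat list \<Rightarrow> nat list list \<Rightarrow> bool" where
  "valid_shape n k ls I Js \<longleftrightarrow>
     length I = k \<and> set I \<subseteq> {1..n} \<and> length Js = length ls \<and>
     (\<forall>a<length ls. length (Js ! a) = ls ! a \<and> set (Js ! a) \<subseteq> {1..n})"

definition inH :: "nat \<Rightarrow> nat \<Rightarrow> nat list \<Rightarrow> arr \<Rightarrow> bool" where
  "inH n k ls X \<longleftrightarrow>
     (\<forall>I Js. \<not> valid_shape n k ls I Js \<longrightarrow> X I Js = 0) \<and>
     (k > n \<longrightarrow> X = (\<lambda>_ _. 0)) \<and>
     (\<forall>I Js p. p permutes {..<length I} \<longrightarrow>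
         X (permute_list p I) Js = of_int (sign p) * X I Js) \<and>
     (\<forall>I Js a p. a < length Js \<longrightarrow> p permutes {..<length (Js ! a)} \<longrightarrow>
         X I (Js[a := permute_list p (Js ! a)]) = X I Js)"

text \<open>The operator B_alpha (here alpha is 0-based: B n a corresponds to B_{a+1}):
  (B X)^{..,{j_0..j_l},..}_{i_0..i_k} =
     S^+_{j_0..j_l} S^-_{i_0..i_k} delta^{j_0}_{i_0} X^{..,{j_1..j_l},..}_{i_1..i_k},
  each (anti)symmetrizer normalized by 1/p!; the result is 0 if k+1 > n.\<close>
definition B :: "nat \<Rightarrow> nat \<Rightarrow> arr \<Rightarrow> arr" where
  "B n a X = (\<lambda>I Js.
     if I \<noteq> [] \<and> length I \<le> n \<and> set I \<subseteq> {1..n} \<and> a < length Js \<and> Js ! a \<noteq> [] \<and>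
        (\<forall>b<length Js. set (Js ! b) \<subseteq> {1..n})
     then (1 / fact (length (Js ! a))) * (1 / fact (length I)) *
       (\<Sum>\<sigma>\<in>{\<sigma>. \<sigma> permutes {..<length (Js ! a)}}.
         \<Sum>\<tau>\<in>{\<tau>. \<tau> permutes {..<length I}}.
           of_int (sign \<tau>) *
           (if hd (permute_list \<sigma> (Js ! a)) = hd (permute_list \<tau> I)
            then X (tl (permute_list \<tau> I)) (Js[a := tl (permute_list \<sigma> (Js ! a))])
            else 0))
     else 0)"

end

theory Submission
  imports Defs
begin

(* Write Z_j = B_j B_(j+1) ... B_q X.  Each B_alpha contracts one fermion index with one boson
   index of type alpha; since X, and hence every Z_j, is symmetric in the bosons of each type, the
   symmetrizer in B_alpha only sees the relative multiplicity freq x J of the contracted value x in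
   the string J.  By descending induction on j, Z_j(I, K) is therefore the antisymmetrization over
   I of  prod_beta freq (I_beta) (K_(j+beta)) * X(K with I_beta removed from slot j+beta).

   To show X(J) = 0 for a shape J, evaluate Z_1 = 0 at I = (1, ..., q) and at the strings
   K_beta = (beta+1) J_beta.  The identity permutation contributes a positive multiple of X(J).
   Any other permutation tau contributes either 0 or a multiple of X(J'), where J' is obtained by
   replacing, in each slot beta, an entry tau(beta)+1 by beta+1; by the rearrangement inequality J' has
   strictly larger weight  sum_beta (beta+1) * (sum of J_beta),  and the weights of shapes are
   bounded.  Descending induction on the weight gives X(J) = 0. *)

section \<open>Permutations and antisymmetrization\<close>

definition perm_shift :: "(nat \<Rightarrow> nat) \<Rightarrow> nat \<Rightarrow> nat" where
  "perm_shift \<rho> i = (case i of 0 \<Rightarrow> 0 | Suc i' \<Rightarrow> Suc (\<rho> i'))"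

lemma perm_shift_permutes:
  assumes "\<rho> permutes {..<m}"
  shows "perm_shift \<rho> permutes {..<Suc m}"
proof (rule bij_imp_permutes)
  have "inj_on (perm_shift \<rho>) {..<Suc m}"
  proof (rule inj_onI)
    fix i j assume "perm_shift \<rho> i = perm_shift \<rho> j"
    then show "i = j"
      using permutes_inj[OF assms] by (cases i; cases j) (auto simp: perm_shift_def inj_eq)
  qed
  moreover have "perm_shift \<rho> i < Suc m" if "i < Suc m" for i
    using that permutes_in_image[OF assms] by (cases i) (auto simp: perm_shift_def)
  ultimately show "bij_betw (perm_shift \<rho>) {..<Suc m} {..<Suc m}"
    by (intro bij_betw_imageI endo_inj_surj) auto
  show "perm_shift \<rho> i = i" if "i \<notin> {..<Suc m}" for i
    using that permutes_not_in[OF assms] by (cases i) (auto simp: perm_shift_def)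
qed

lemma sign_perm_shift:
  assumes "\<rho> permutes {..<m}"
  shows "sign (perm_shift \<rho>) = sign \<rho>"
  using assms finite_lessThan
proof (induction rule: permutes_induct)
  case id
  have "perm_shift id = id"
    by (rule ext) (simp add: perm_shift_def split: nat.split)
  then show ?case
    by (simp only: sign_id)
next
  case (swap a b p)
  have shift: "perm_shift (transpose a b \<circ> p) = transpose (Suc a) (Suc b) \<circ> perm_shift p"
    by (rule ext) (simp add: perm_shift_def transpose_def split: nat.split)
  have "permutation (perm_shift p)" "permutation p"
    using perm_shift_permutes[OF swap.hyps(4)] swap.hyps(4)
    by (auto intro: permutes_imp_permutation)
  then have "sign (perm_shift (transpose a b \<circ> p)) =
      sign (transpose (Suc a) (Suc b)) * sign (perm_shift p)"
    "sign (transpose a b \<circ> p) = sign (transpose a b) * sign p"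
    unfolding shift by (simp_all only: sign_compose permutation_swap_id)
  then show ?case
    using swap.IH \<open>a \<noteq> b\<close> by (simp add: sign_swap_id comp_def)
qed

lemma permute_list_perm_shift:
  assumes "\<rho> permutes {..<length xs}"
  shows "permute_list (perm_shift \<rho>) (x # xs) = x # permute_list \<rho> xs"
proof (rule nth_equalityI)
  fix i assume "i < length (permute_list (perm_shift \<rho>) (x # xs))"
  then show "permute_list (perm_shift \<rho>) (x # xs) ! i = (x # permute_list \<rho> xs) ! i"
    using perm_shift_permutes[OF assms] assms
    by (cases i) (simp_all add: permute_list_nth perm_shift_def)
qed simp

lemma hd_permute_list:
  assumes "\<sigma> permutes {..<length xs}" and "xs \<noteq> []"
  shows "hd (permute_list \<sigma> xs) = xs ! \<sigma> 0"
proof -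
  have "permute_list \<sigma> xs \<noteq> []"
    using assms(2) by (metis length_0_conv length_permute_list)
  then show ?thesis
    using assms by (simp add: hd_conv_nth permute_list_nth)
qed

lemma mset_tl_permute_list:
  assumes "\<sigma> permutes {..<length xs}" and "xs \<noteq> []"
  shows "mset (tl (permute_list \<sigma> xs)) = mset (remove1 (xs ! \<sigma> 0) xs)"
proof -
  have "permute_list \<sigma> xs = xs ! \<sigma> 0 # tl (permute_list \<sigma> xs)"
    using hd_permute_list[OF assms] assms(2)
    by (metis length_0_conv length_permute_list list.collapse)
  then have "mset xs = add_mset (xs ! \<sigma> 0) (mset (tl (permute_list \<sigma> xs)))"
    using assms(1) by (metis mset.simps(2) mset_permute_list)
  then show ?thesis
    by (simp add: mset_remove1)
qed

lemma sum_permutes_apply_0: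
  fixes f :: "nat \<Rightarrow> 'b::comm_semiring_1"
  assumes "0 < m"
  shows "(\<Sum>\<sigma> | \<sigma> permutes {..<m}. f (\<sigma> 0)) = of_nat (fact (m - 1)) * (\<Sum>i<m. f i)"
proof -
  have m: "{..<m} = insert 0 {1..<m}"
    using assms by auto
  have "(\<Sum>\<sigma> | \<sigma> permutes {..<m}. f (\<sigma> 0)) =
      (\<Sum>b<m. \<Sum>p | p permutes {1..<m}. f ((transpose 0 b \<circ> p) 0))"
    unfolding m by (rule sum_over_permutations_insert) auto
  also have "\<dots> = (\<Sum>b<m. \<Sum>p | p permutes {1..<m}. f b)"
    by (intro sum.cong refl) (simp add: permutes_not_in)
  also have "\<dots> = of_nat (fact (m - 1)) * (\<Sum>i<m. f i)"
    by (simp add: card_permutations sum_distrib_left)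
  finally show ?thesis .
qed

lemma sum_mult_permutes_less:
  fixes f :: "'a \<Rightarrow> 'b::linordered_idom"
  assumes \<tau>: "\<tau> permutes S" and "finite S" "inj_on f S" "\<tau> \<noteq> id"
  shows "(\<Sum>x\<in>S. f x * f (\<tau> x)) < (\<Sum>x\<in>S. f x * f x)"
proof -
  obtain x where x: "x \<in> S" "\<tau> x \<noteq> x"
    using assms(4) permutes_not_in[OF \<tau>] by (metis eq_id_iff)
  then have "f x \<noteq> f (\<tau> x)"
    using \<open>inj_on f S\<close> permutes_in_image[OF \<tau>] by (metis inj_on_eq_iff)
  then have "0 < (f x - f (\<tau> x))\<^sup>2"
    by simp
  also have "\<dots> \<le> (\<Sum>y\<in>S. (f y - f (\<tau> y))\<^sup>2)"
    using \<open>finite S\<close> x(1) by (intro member_le_sum) auto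
  also have "\<dots> = 2 * ((\<Sum>y\<in>S. f y * f y) - (\<Sum>y\<in>S. f y * f (\<tau> y)))"
  proof -
    have "(\<Sum>y\<in>S. f (\<tau> y) * f (\<tau> y)) = (\<Sum>y\<in>S. f y * f y)"
      using sum.permute[OF \<tau>, of "\<lambda>y. f y * f y"] by (simp add: comp_def)
    then show ?thesis
      by (simp add: power2_eq_square algebra_simps sum.distrib sum_subtractf sum_distrib_left)
  qed
  finally show ?thesis
    by simp
qed

definition antisymmetrize :: "('a list \<Rightarrow> real) \<Rightarrow> 'a list \<Rightarrow> real" where
  "antisymmetrize F xs =
     (\<Sum>\<tau> | \<tau> permutes {..<length xs}. of_int (sign \<tau>) * F (permute_list \<tau> xs))
       / fact (length xs)"

lemma antisymmetrize_Nil [simp]: "antisymmetrize F [] = F []"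
  by (simp add: antisymmetrize_def)

lemma antisymmetrize_cong:
  assumes "\<And>ys. mset ys = mset xs \<Longrightarrow> F ys = G ys"
  shows "antisymmetrize F xs = antisymmetrize G xs"
  unfolding antisymmetrize_def using assms by (auto intro!: sum.cong)

lemma antisymmetrize_mult_left:
  "antisymmetrize (\<lambda>ys. c * F ys) xs = c * antisymmetrize F xs"
  by (simp add: antisymmetrize_def sum_distrib_left mult_ac)

lemma antisymmetrize_eq_identity_term:
  assumes "\<And>\<tau>. \<tau> permutes {..<length xs} \<Longrightarrow> \<tau> \<noteq> id \<Longrightarrow> F (permute_list \<tau> xs) = 0"
  shows "antisymmetrize F xs = F xs / fact (length xs)"
  unfolding antisymmetrize_def
  by (subst sum.remove[of _ id]) (auto simp: permutes_id finite_permutations assms)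

text \<open>Every permutation of a nonempty list factors uniquely as \<open>\<tau> \<circ> perm_shift \<rho>\<close>.\<close>

lemma antisymmetrize_hd_tl:
  assumes "xs \<noteq> []"
  shows "antisymmetrize (\<lambda>ys. antisymmetrize (F (hd ys)) (tl ys)) xs =
    antisymmetrize (\<lambda>ys. F (hd ys) (tl ys)) xs"
proof -
  obtain m where m: "length xs = Suc m"
    using assms by (cases xs) auto
  define G where "G ys = F (hd ys) (tl ys)" for ys
  define S where "S = (\<Sum>\<tau> | \<tau> permutes {..<Suc m}. of_int (sign \<tau>) * G (permute_list \<tau> xs))"
  have summand: "of_int (sign \<tau>) * (of_int (sign \<rho>) *
        F (hd (permute_list \<tau> xs)) (permute_list \<rho> (tl (permute_list \<tau> xs)))) =
      of_int (sign (\<tau> \<circ> perm_shift \<rho>)) * G (permute_list (\<tau> \<circ> perm_shift \<rho>) xs)"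
    if \<tau>: "\<tau> permutes {..<Suc m}" and \<rho>: "\<rho> permutes {..<m}" for \<tau> \<rho>
  proof -
    have "permute_list \<tau> xs = hd (permute_list \<tau> xs) # tl (permute_list \<tau> xs)"
      using m by (metis length_permute_list list.collapse list.size(3) nat.distinct(1))
    moreover have "\<rho> permutes {..<length (tl (permute_list \<tau> xs))}"
      using \<rho> m by simp
    ultimately have "permute_list (\<tau> \<circ> perm_shift \<rho>) xs =
        hd (permute_list \<tau> xs) # permute_list \<rho> (tl (permute_list \<tau> xs))"
      using perm_shift_permutes[OF \<rho>] m
      by (metis permute_list_compose permute_list_perm_shift)
    moreover have "sign (\<tau> \<circ> perm_shift \<rho>) = sign \<tau> * sign \<rho>"
      using \<tau> perm_shift_permutes[OF \<rho>] sign_perm_shift[OF \<rho>]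
      by (metis sign_compose permutes_imp_permutation finite_lessThan)
    ultimately show ?thesis
      by (simp add: G_def)
  qed
  have "(\<Sum>\<tau> | \<tau> permutes {..<Suc m}. of_int (sign \<tau>) *
        antisymmetrize (F (hd (permute_list \<tau> xs))) (tl (permute_list \<tau> xs))) =
      (\<Sum>\<tau> | \<tau> permutes {..<Suc m}. \<Sum>\<rho> | \<rho> permutes {..<m}.
        of_int (sign (\<tau> \<circ> perm_shift \<rho>)) * G (permute_list (\<tau> \<circ> perm_shift \<rho>) xs)) / fact m"
    using m summand by (simp add: antisymmetrize_def sum_divide_distrib sum_distrib_left)
  also have "\<dots> = (\<Sum>\<rho> | \<rho> permutes {..<m}. S) / fact m"
  proof -
    have "(\<Sum>\<tau> | \<tau> permutes {..<Suc m}.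
        of_int (sign (\<tau> \<circ> perm_shift \<rho>)) * G (permute_list (\<tau> \<circ> perm_shift \<rho>) xs)) = S"
      if "\<rho> permutes {..<m}" for \<rho>
      unfolding S_def
      by (rule sum_permutations_compose_right[OF perm_shift_permutes[OF that], symmetric])
    then show ?thesis
      by (subst sum.swap) simp
  qed
  also have "\<dots> = S"
    by (simp add: card_permutations)
  finally show ?thesis
    using m by (simp add: antisymmetrize_def S_def G_def)
qed

section \<open>The operators B on slot-symmetric arrays\<close>

definition freq :: "'a \<Rightarrow> 'a list \<Rightarrow> real" where
  "freq x xs = count (mset xs) x / length xs"

lemma freq_pos: "x \<in> set xs \<Longrightarrow> 0 < freq x xs"
  by (auto simp: freq_def intro!: divide_pos_pos)

lemma freq_eq_0: "x \<notin> set xs \<Longrightarrow> freq x xs = 0"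
  by (simp add: freq_def)

lemma freq_eq_average_permutes:
  assumes "xs \<noteq> []"
  shows "(\<Sum>\<sigma> | \<sigma> permutes {..<length xs}. if xs ! \<sigma> 0 = x then 1 else 0) / fact (length xs) =
    freq x xs"
proof -
  have "(\<Sum>i<length xs. if xs ! i = x then 1 else 0) =
      real (card {i. i < length xs \<and> xs ! i = x})"
    by (simp add: sum.If_cases Int_def conj_commute)
  also have "\<dots> = count (mset xs) x"
    by (simp add: count_mset count_list_eq_length_filter length_filter_conv_card eq_commute)
  finally show ?thesis
    using assms sum_permutes_apply_0[of "length xs" "\<lambda>i. if xs ! i = x then 1 else (0::real)"]
    by (simp add: freq_def fact_reduce[of "length xs"])
qed

definition symmetric_in_slot :: "nat \<Rightarrow> arr \<Rightarrow> bool" where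
  "symmetric_in_slot a Y \<longleftrightarrow>
     (\<forall>I Js A. mset A = mset (Js ! a) \<longrightarrow> Y I (Js[a := A]) = Y I Js)"

lemma inH_symmetric_in_slot:
  assumes "inH n k ls X"
  shows "symmetric_in_slot a X"
  unfolding symmetric_in_slot_def
proof (intro allI impI)
  fix I Js and A :: "nat list"
  assume A: "mset A = mset (Js ! a)"
  show "X I (Js[a := A]) = X I Js"
  proof (cases "a < length Js")
    case True
    obtain p where "p permutes {..<length (Js ! a)}" "permute_list p (Js ! a) = A"
      using mset_eq_permutation[OF A] .
    then show ?thesis
      using assms True by (auto simp: inH_def)
  qed (simp add: list_update_beyond)
qed

lemma symmetric_in_slot_B:
  assumes sym: "symmetric_in_slot a Y" and "a \<noteq> b"
  shows "symmetric_in_slot a (B n b Y)"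
  unfolding symmetric_in_slot_def
proof (intro allI impI)
  fix I Js and A :: "nat list"
  assume A: "mset A = mset (Js ! a)"
  show "B n b Y I (Js[a := A]) = B n b Y I Js"
  proof (cases "a < length Js")
    case True
    have "set A = set (Js ! a)"
      using A by (metis set_mset_mset)
    then have guard: "(\<forall>c<length Js. set (Js[a := A] ! c) \<subseteq> {1..n}) \<longleftrightarrow>
        (\<forall>c<length Js. set (Js ! c) \<subseteq> {1..n})"
      by (metis length_list_update nth_list_update_eq nth_list_update_neq)
    have slot_b: "Js[a := A] ! b = Js ! b"
      using \<open>a \<noteq> b\<close> by simp
    have "Y L (Js[a := A, b := t]) = Y L (Js[b := t])" for L t
      using sym A \<open>a \<noteq> b\<close> unfolding symmetric_in_slot_def
      by (metis list_update_swap nth_list_update_neq)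
    then show ?thesis
      unfolding B_def by (simp only: length_list_update slot_b guard)
  qed (simp add: list_update_beyond)
qed

lemma symmetric_in_slot_foldr_B:
  assumes "symmetric_in_slot a X" and "a \<notin> set bs"
  shows "symmetric_in_slot a (foldr (B n) bs X)"
  using assms(2) by (induction bs) (auto intro: symmetric_in_slot_B assms(1))

text \<open>On arrays symmetric in slot \<open>a\<close>, the symmetrizer in \<open>B n a\<close> only sees how often the
  contracted index occurs in slot \<open>a\<close>.\<close>

lemma B_eq_antisymmetrize:
  assumes sym: "symmetric_in_slot a Y"
    and I: "I \<noteq> []" "length I \<le> n" "set I \<subseteq> {1..n}"
    and Js: "a < length Js" "\<forall>b<length Js. set (Js ! b) \<subseteq> {1..n}"
  shows "B n a Y I Js =
    antisymmetrize (\<lambda>L. freq (hd L) (Js ! a) * Y (tl L) (Js[a := remove1 (hd L) (Js ! a)])) I"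
proof (cases "Js ! a = []")
  case True
  then show ?thesis
    by (simp add: B_def antisymmetrize_def freq_def)
next
  case False
  define M where "M = Js ! a"
  define W where "W L = Y (tl L) (Js[a := remove1 (hd L) M])" for L
  have summand: "(if hd (permute_list \<sigma> M) = hd L
        then Y (tl L) (Js[a := tl (permute_list \<sigma> M)]) else 0) =
      (if M ! \<sigma> 0 = hd L then 1 else 0) * W L"
    if \<sigma>: "\<sigma> permutes {..<length M}" for \<sigma> L
  proof -
    have "M \<noteq> []"
      using False by (simp add: M_def)
    then have "Y (tl L) (Js[a := tl (permute_list \<sigma> M)]) =
        Y (tl L) (Js[a := remove1 (M ! \<sigma> 0) M])"
      using sym Js(1) mset_tl_permute_list[OF \<sigma>] unfolding symmetric_in_slot_def
      by (metis list_update_overwrite nth_list_update_eq)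
    then show ?thesis
      using hd_permute_list[OF \<sigma> \<open>M \<noteq> []\<close>] by (simp add: W_def)
  qed
  have "B n a Y I Js = (\<Sum>\<sigma> | \<sigma> permutes {..<length M}. \<Sum>\<tau> | \<tau> permutes {..<length I}.
        of_int (sign \<tau>) * (if hd (permute_list \<sigma> M) = hd (permute_list \<tau> I)
          then Y (tl (permute_list \<tau> I)) (Js[a := tl (permute_list \<sigma> M)]) else 0))
      / fact (length M) / fact (length I)"
    using I Js False unfolding M_def by (simp add: B_def)
  also have "\<dots> = (\<Sum>\<sigma> | \<sigma> permutes {..<length M}. \<Sum>\<tau> | \<tau> permutes {..<length I}.
        of_int (sign \<tau>) *
          ((if M ! \<sigma> 0 = hd (permute_list \<tau> I) then 1 else 0) * W (permute_list \<tau> I)))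
      / fact (length M) / fact (length I)"
    using summand by simp
  also have "\<dots> = (\<Sum>\<tau> | \<tau> permutes {..<length I}. of_int (sign \<tau>) *
        ((\<Sum>\<sigma> | \<sigma> permutes {..<length M}. if M ! \<sigma> 0 = hd (permute_list \<tau> I) then 1 else 0)
          / fact (length M) * W (permute_list \<tau> I))) / fact (length I)"
    by (subst sum.swap) (simp add: sum_distrib_left sum_distrib_right sum_divide_distrib mult_ac)
  also have "\<dots> = antisymmetrize (\<lambda>L. freq (hd L) M * W L) I"
    using False by (simp add: freq_eq_average_permutes antisymmetrize_def M_def)
  finally show ?thesis
    by (simp add: W_def M_def)
qed

section \<open>Closed form of the iterated operators\<close>

fun remove_from_slots :: "nat list list \<Rightarrow> nat \<Rightarrow> nat list \<Rightarrow> nat list list" where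
  "remove_from_slots K j [] = K"
| "remove_from_slots K j (x # L) = remove_from_slots (K[j := remove1 x (K ! j)]) (Suc j) L"

lemma length_remove_from_slots [simp]: "length (remove_from_slots K j L) = length K"
  by (induction L arbitrary: K j) auto

lemma nth_remove_from_slots:
  "b < length K \<Longrightarrow> remove_from_slots K j L ! b =
    (if j \<le> b \<and> b < j + length L then remove1 (L ! (b - j)) (K ! b) else K ! b)"
proof (induction L arbitrary: K j)
  case (Cons x L)
  then show ?case
    by (cases "b = j") (auto simp: nth_Cons' Suc_diff_Suc)
qed auto

text \<open>The term of \<open>foldr (B n) [j..<q] X\<close> in which the fermion \<open>L ! \<beta>\<close> has been
  contracted with a boson of slot \<open>j + \<beta>\<close>.\<close>

definition peel :: "arr \<Rightarrow> nat \<Rightarrow> nat list list \<Rightarrow> nat list \<Rightarrow> real" where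
  "peel X j K L =
     (\<Prod>\<beta><length L. freq (L ! \<beta>) (K ! (j + \<beta>))) * X [] (remove_from_slots K j L)"

lemma peel_Nil [simp]: "peel X j K [] = X [] K"
  by (simp add: peel_def)

lemma peel_Cons:
  "peel X j K (x # L) = freq x (K ! j) * peel X (Suc j) (K[j := remove1 x (K ! j)]) L"
proof -
  have "(\<Prod>\<beta><length L. freq (L ! \<beta>) (K[j := remove1 x (K ! j)] ! (Suc j + \<beta>))) =
      (\<Prod>\<beta><length L. freq (L ! \<beta>) (K ! (j + Suc \<beta>)))"
    by (intro prod.cong refl) simp
  then show ?thesis
    unfolding peel_def length_Cons prod.lessThan_Suc_shift by simp
qed

lemma B_eq_antisymmetrize_peel:
  assumes sym: "symmetric_in_slot j Y" and "q \<le> n" "j < q"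
    and Y: "\<And>L K. length L = q - Suc j \<Longrightarrow> set L \<subseteq> {1..n} \<Longrightarrow>
      length K = q \<Longrightarrow> \<forall>b<q. set (K ! b) \<subseteq> {1..n} \<Longrightarrow>
      Y L K = antisymmetrize (peel X (Suc j) K) L"
    and I: "length I = q - j" "set I \<subseteq> {1..n}"
    and K: "length K = q" "\<forall>b<q. set (K ! b) \<subseteq> {1..n}"
  shows "B n j Y I K = antisymmetrize (peel X j K) I"
proof -
  define M where "M = K ! j"
  have "I \<noteq> []"
    using I \<open>j < q\<close> by auto
  have K': "\<forall>b<q. set (K[j := remove1 x M] ! b) \<subseteq> {1..n}" for x
  proof (intro allI impI)
    fix b assume "b < q"
    then show "set (K[j := remove1 x M] ! b) \<subseteq> {1..n}"
      using K \<open>j < q\<close> set_remove1_subset[of x M] by (cases "b = j") (auto simp: M_def)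
  qed
  have "B n j Y I K =
      antisymmetrize (\<lambda>L. freq (hd L) M * Y (tl L) (K[j := remove1 (hd L) M])) I"
    using I K \<open>j < q\<close> \<open>I \<noteq> []\<close> \<open>q \<le> n\<close> by (simp add: B_eq_antisymmetrize sym M_def)
  also have "\<dots> = antisymmetrize (\<lambda>L. freq (hd L) M *
      antisymmetrize (peel X (Suc j) (K[j := remove1 (hd L) M])) (tl L)) I"
  proof (rule antisymmetrize_cong)
    fix L assume "mset L = mset I"
    then have "length L = length I" "set L = set I"
      by (auto dest: mset_eq_length mset_eq_setD)
    then have "length (tl L) = q - Suc j" "set (tl L) \<subseteq> {1..n}"
      using I by (cases L; auto)+
    then show "freq (hd L) M * Y (tl L) (K[j := remove1 (hd L) M]) = freq (hd L) M *
        antisymmetrize (peel X (Suc j) (K[j := remove1 (hd L) M])) (tl L)"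
      using Y K' K by simp
  qed
  also have "\<dots> = antisymmetrize
      (\<lambda>L. freq (hd L) M * peel X (Suc j) (K[j := remove1 (hd L) M]) (tl L)) I"
    using antisymmetrize_hd_tl[OF \<open>I \<noteq> []\<close>,
        of "\<lambda>x L. freq x M * peel X (Suc j) (K[j := remove1 x M]) L"]
    by (simp add: antisymmetrize_mult_left)
  also have "\<dots> = antisymmetrize (peel X j K) I"
  proof (rule antisymmetrize_cong)
    fix L assume "mset L = mset I"
    then have "L = hd L # tl L"
      using \<open>I \<noteq> []\<close> by (metis list.collapse mset_zero_iff)
    then show "freq (hd L) M * peel X (Suc j) (K[j := remove1 (hd L) M]) (tl L) = peel X j K L"
      by (metis M_def peel_Cons)
  qed
  finally show ?thesis .
qed

lemma foldr_B_eq_antisymmetrize_peel: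
  assumes sym: "\<And>a. symmetric_in_slot a X" and "q \<le> n"
  shows "j \<le> q \<Longrightarrow> length I = q - j \<Longrightarrow> set I \<subseteq> {1..n} \<Longrightarrow>
    length K = q \<Longrightarrow> \<forall>b<q. set (K ! b) \<subseteq> {1..n} \<Longrightarrow>
    foldr (B n) [j..<q] X I K = antisymmetrize (peel X j K) I"
proof (induction "q - j" arbitrary: j I K)
  case 0
  then show ?case
    by simp
next
  case (Suc d)
  then have "j < q"
    by simp
  then have "foldr (B n) [j..<q] X = B n j (foldr (B n) [Suc j..<q] X)"
    by (simp add: upt_conv_Cons)
  moreover have "symmetric_in_slot j (foldr (B n) [Suc j..<q] X)"
    by (simp add: symmetric_in_slot_foldr_B sym)
  ultimately show ?case
    using B_eq_antisymmetrize_peel[OF _ \<open>q \<le> n\<close> \<open>j < q\<close>] Suc by simp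
qed

section \<open>Recovering X from the closed form\<close>

text \<open>Prepending \<open>\<beta> + 1\<close> to slot \<open>\<beta>\<close> makes the identity term of the closed form at
  \<open>I = [1..q]\<close> a positive multiple of \<open>X [] J\<close>.\<close>

definition tag_slots :: "nat list list \<Rightarrow> nat list list" where
  "tag_slots J = map (\<lambda>\<beta>. Suc \<beta> # J ! \<beta>) [0..<length J]"

definition untag_slots :: "(nat \<Rightarrow> nat) \<Rightarrow> nat list list \<Rightarrow> nat list list" where
  "untag_slots \<tau> J = map (\<lambda>\<beta>. remove1 (Suc (\<tau> \<beta>)) (Suc \<beta> # J ! \<beta>)) [0..<length J]"

lemma untag_slots_id [simp]: "untag_slots id J = J"
  by (rule nth_equalityI) (simp_all add: untag_slots_def)

lemma peel_tag_slots:
  assumes "\<tau> permutes {..<length J}"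
  shows "peel X 0 (tag_slots J) (permute_list \<tau> (map Suc [0..<length J])) =
    (\<Prod>\<beta><length J. freq (Suc (\<tau> \<beta>)) (Suc \<beta> # J ! \<beta>)) * X [] (untag_slots \<tau> J)"
proof -
  have perm: "permute_list \<tau> (map Suc [0..<length J]) = map (\<lambda>\<beta>. Suc (\<tau> \<beta>)) [0..<length J]"
    using permutes_in_image[OF assms] by (simp add: permute_list_def)
  have "remove_from_slots (tag_slots J) 0 (map (\<lambda>\<beta>. Suc (\<tau> \<beta>)) [0..<length J]) =
      untag_slots \<tau> J"
    by (rule nth_equalityI) (simp_all add: nth_remove_from_slots tag_slots_def untag_slots_def)
  then show ?thesis
    by (simp add: peel_def perm tag_slots_def)
qed

lemma valid_shape_untag_slots:
  assumes J: "valid_shape n 0 r [] J" and "length r \<le> n"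
    and mem: "\<forall>\<beta><length J. Suc (\<tau> \<beta>) \<in> set (Suc \<beta> # J ! \<beta>)"
  shows "valid_shape n 0 r [] (untag_slots \<tau> J)"
  unfolding valid_shape_def
proof (intro conjI allI impI)
  show "length (untag_slots \<tau> J) = length r"
    using J by (simp add: untag_slots_def valid_shape_def)
  fix \<beta> assume "\<beta> < length r"
  then have "\<beta> < length J"
    using J by (simp add: valid_shape_def)
  then have slot: "untag_slots \<tau> J ! \<beta> = remove1 (Suc (\<tau> \<beta>)) (Suc \<beta> # J ! \<beta>)"
    by (simp add: untag_slots_def del: remove1.simps)
  show "length (untag_slots \<tau> J ! \<beta>) = r ! \<beta>"
    using mem \<open>\<beta> < length J\<close> J unfolding slot
    by (simp only: length_remove1 if_True) (simp add: valid_shape_def)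
  have "set (Suc \<beta> # J ! \<beta>) \<subseteq> {1..n}"
    using \<open>\<beta> < length r\<close> \<open>length r \<le> n\<close> J by (simp add: valid_shape_def)
  then show "set (untag_slots \<tau> J ! \<beta>) \<subseteq> {1..n}"
    unfolding slot by (meson order_trans set_remove1_subset)
qed simp_all

definition slot_weight :: "nat list list \<Rightarrow> nat" where
  "slot_weight J = (\<Sum>\<beta><length J. Suc \<beta> * sum_list (J ! \<beta>))"

lemma slot_weight_le:
  assumes "valid_shape n 0 r [] J"
  shows "slot_weight J \<le> (\<Sum>\<beta><length r. Suc \<beta> * (r ! \<beta> * n))"
proof -
  have "sum_list (J ! \<beta>) \<le> r ! \<beta> * n" if "\<beta> < length r" for \<beta>
  proof -
    have "set (J ! \<beta>) \<subseteq> {1..n}" "length (J ! \<beta>) = r ! \<beta>"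
      using assms that by (simp_all add: valid_shape_def)
    then have "sum_list (map id (J ! \<beta>)) \<le> sum_list (map (\<lambda>_. n) (J ! \<beta>))"
      by (intro sum_list_mono) auto
    then show ?thesis
      using \<open>length (J ! \<beta>) = r ! \<beta>\<close> by (simp add: sum_list_triv)
  qed
  moreover have "length J = length r"
    using assms by (simp add: valid_shape_def)
  ultimately show ?thesis
    unfolding slot_weight_def by (simp only:) (intro sum_mono mult_le_mono2; simp)
qed

text \<open>Slot \<open>\<beta>\<close> gains \<open>\<beta> + 1\<close> and loses \<open>\<tau> \<beta> + 1\<close>, so the weight grows by
  \<open>\<Sum>\<beta>. (\<beta> + 1)\<^sup>2 - (\<beta> + 1) (\<tau> \<beta> + 1)\<close>, which is positive for \<open>\<tau> \<noteq> id\<close> by the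
  rearrangement inequality.\<close>

lemma slot_weight_untag_slots:
  assumes \<tau>: "\<tau> permutes {..<length J}" "\<tau> \<noteq> id"
    and mem: "\<forall>\<beta><length J. Suc (\<tau> \<beta>) \<in> set (Suc \<beta> # J ! \<beta>)"
  shows "slot_weight J < slot_weight (untag_slots \<tau> J)"
proof -
  define J' where "J' = untag_slots \<tau> J"
  have length_J': "length J' = length J"
    by (simp add: J'_def untag_slots_def)
  have row: "sum_list (J' ! \<beta>) + Suc (\<tau> \<beta>) = Suc \<beta> + sum_list (J ! \<beta>)"
    if "\<beta> < length J" for \<beta>
    using sum_list_map_remove1[OF mem[rule_format, OF that], of id] that
    by (simp add: J'_def untag_slots_def del: remove1.simps)
  have "slot_weight J' + (\<Sum>\<beta><length J. Suc \<beta> * Suc (\<tau> \<beta>)) =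
      (\<Sum>\<beta><length J. Suc \<beta> * (sum_list (J' ! \<beta>) + Suc (\<tau> \<beta>)))"
    using length_J' by (simp only: slot_weight_def add_mult_distrib2 sum.distrib)
  also have "\<dots> = (\<Sum>\<beta><length J. Suc \<beta> * (Suc \<beta> + sum_list (J ! \<beta>)))"
    using row by (intro sum.cong refl) simp
  also have "\<dots> = (\<Sum>\<beta><length J. Suc \<beta> * Suc \<beta>) + slot_weight J"
    by (simp only: slot_weight_def add_mult_distrib2 sum.distrib)
  finally have "slot_weight J' + (\<Sum>\<beta><length J. Suc \<beta> * Suc (\<tau> \<beta>)) =
      (\<Sum>\<beta><length J. Suc \<beta> * Suc \<beta>) + slot_weight J" .
  moreover have "(\<Sum>\<beta><length J. int (Suc \<beta>) * int (Suc (\<tau> \<beta>))) <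
      (\<Sum>\<beta><length J. int (Suc \<beta>) * int (Suc \<beta>))"
    by (rule sum_mult_permutes_less[OF \<tau>(1) _ _ \<tau>(2)]) (auto simp: inj_on_def)
  then have "(\<Sum>\<beta><length J. Suc \<beta> * Suc (\<tau> \<beta>)) < (\<Sum>\<beta><length J. Suc \<beta> * Suc \<beta>)"
    by (simp only: of_nat_mult[symmetric] of_nat_sum[symmetric] of_nat_less_iff)
  ultimately show ?thesis
    by (simp add: J'_def)
qed

lemma eq_0_if_antisymmetrized_peels_vanish:
  assumes "q \<le> n" and r: "length r = q"
    and shape: "\<forall>I Js. \<not> valid_shape n 0 r I Js \<longrightarrow> X I Js = 0"
    and vanish: "\<And>J. valid_shape n 0 r [] J \<Longrightarrow>
      antisymmetrize (peel X 0 (tag_slots J)) (map Suc [0..<q]) = 0"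
  shows "X = (\<lambda>_ _. 0)"
proof -
  define N where "N = (\<Sum>\<beta><length r. Suc \<beta> * (r ! \<beta> * n))"
  have "X [] J = 0" for J
  proof (induction J rule: measure_induct_rule[where f="\<lambda>J. N - slot_weight J"])
    case (less J)
    show ?case
    proof (cases "valid_shape n 0 r [] J")
      case False
      then show ?thesis
        using shape by blast
    next
      case True
      then have lenJ: "length J = q"
        using r by (simp add: valid_shape_def)
      have "peel X 0 (tag_slots J) (permute_list \<tau> (map Suc [0..<q])) = 0"
        if \<tau>: "\<tau> permutes {..<q}" "\<tau> \<noteq> id" for \<tau>
      proof (cases "\<forall>\<beta><q. Suc (\<tau> \<beta>) \<in> set (Suc \<beta> # J ! \<beta>)")
        case False
        then obtain \<beta> where "\<beta> < q" "Suc (\<tau> \<beta>) \<notin> set (Suc \<beta> # J ! \<beta>)"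
          by blast
        then have "(\<Prod>\<beta><q. freq (Suc (\<tau> \<beta>)) (Suc \<beta> # J ! \<beta>)) = 0"
          by (intro prod_zero bexI[of _ \<beta>] freq_eq_0) auto
        then show ?thesis
          using peel_tag_slots[of \<tau> J X] \<tau> lenJ by simp
      next
        case mem: True
        have valid: "valid_shape n 0 r [] (untag_slots \<tau> J)"
          using valid_shape_untag_slots[OF True] mem lenJ r \<open>q \<le> n\<close> by simp
        then have "N - slot_weight (untag_slots \<tau> J) < N - slot_weight J"
          using slot_weight_untag_slots[of \<tau> J] slot_weight_le[OF valid] \<tau> mem lenJ
          unfolding N_def by simp
        then have "X [] (untag_slots \<tau> J) = 0"
          by (rule less)
        then show ?thesis
          using peel_tag_slots[of \<tau> J X] \<tau> lenJ by simp
      qed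
      then have "0 = peel X 0 (tag_slots J) (map Suc [0..<q]) / fact q"
        using vanish[OF True] antisymmetrize_eq_identity_term[of "map Suc [0..<q]"] by simp
      also have "\<dots> = (\<Prod>\<beta><q. freq (Suc \<beta>) (Suc \<beta> # J ! \<beta>)) * X [] J / fact q"
        using peel_tag_slots[of id J X] lenJ by (simp add: permutes_id)
      finally have "(\<Prod>\<beta><q. freq (Suc \<beta>) (Suc \<beta> # J ! \<beta>)) * X [] J = 0"
        by simp
      moreover have "0 < (\<Prod>\<beta><q. freq (Suc \<beta>) (Suc \<beta> # J ! \<beta>))"
        by (intro prod_pos) (simp add: freq_pos)
      ultimately show ?thesis
        by (metis less_irrefl mult_eq_0_iff)
    qed
  qed
  moreover have "X I Js = 0" if "I \<noteq> []" for I Js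
    using shape that by (simp add: valid_shape_def)
  ultimately show ?thesis
    by (metis ext)
qed

theorem mainTheorem1:
  fixes n q :: nat and r :: "nat list" and X :: arr
  assumes "n \<ge> 2" and "2 \<le> q" and "q \<le> n" and "length r = q"
    and "inH n 0 r X"
    and "foldr (\<lambda>a Y. B n a Y) [0..<q] X = (\<lambda>_ _. 0)"
  shows "X = (\<lambda>_ _. 0)"
proof (rule eq_0_if_antisymmetrized_peels_vanish[OF \<open>q \<le> n\<close> \<open>length r = q\<close>])
  show "\<forall>I Js. \<not> valid_shape n 0 r I Js \<longrightarrow> X I Js = 0"
    using \<open>inH n 0 r X\<close> by (simp add: inH_def)
  fix J assume "valid_shape n 0 r [] J"
  then have "length J = q" "\<forall>b<q. set (J ! b) \<subseteq> {1..n}"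
    using \<open>length r = q\<close> by (auto simp: valid_shape_def)
  then have "foldr (B n) [0..<q] X (map Suc [0..<q]) (tag_slots J) =
      antisymmetrize (peel X 0 (tag_slots J)) (map Suc [0..<q])"
    using \<open>q \<le> n\<close>
    by (intro foldr_B_eq_antisymmetrize_peel inH_symmetric_in_slot[OF \<open>inH n 0 r X\<close>])
      (auto simp: tag_slots_def)
  then show "antisymmetrize (peel X 0 (tag_slots J)) (map Suc [0..<q]) = 0"
    using \<open>foldr (\<lambda>a Y. B n a Y) [0..<q] X = (\<lambda>_ _. 0)\<close> by simp
qed

end
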